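(* Let $\delta>1$, $\gamma>0$, $A_s,A_u>0$, $\rho_s,\rho_u>0$, $\lambda>0$, $\overline{L}_{BR}>0$ and $L_{other}\ge 0$. For $j\in\{s,u\}$ let $j^*(L)=\left[\gamma^{-\delta}A_j^{\delta-1}L\right]^{\frac{1}{1+\delta\rho_j}}$ for $L>0$. For $BR>0$ and $FS\in[0,BR]$ put $f=FS/BR$, $L(BR,FS)=\overline{L}_{BR}+\lambda(BR-FS)+L_{other}$, and define \[ G_j(BR,FS)=\frac{d j^*}{dL}\big(L(BR,FS)\big)\cdot\lambda(1-f),\qquad j\in\{s,u\}. \] Then $G_s(BR,FS)\ge 0$ and $G_u(BR,FS)\ge 0$, and for $FS$ in the interior $(0,BR)$, \[ \frac{\partial G_s}{\partial FS}(BR,FS)<0,\qquad \frac{\partial G_u}{\partial FS}(BR,FS)<0. \]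
   Context: Model of the legal labor market with forum shopping: $s^*(L),u^*(L)$ are the equilibrium employment levels of skilled and unskilled legal workers given demand for legal services $L$ (derived from labor supply $j=(w_j/\gamma)^{1/\rho_j}$ and marginal-product wages $w_j=A_j^{\frac{\delta-1}{\delta}}(L/j)^{1/\delta}$ of a CES firm with elasticity $\delta$). $BR$ measures local bankruptcies and $FS$ the part forum shopped (filed in a non-local court); $f=FS/BR$ is the forum-shopped share. The bankruptcy shock has magnitude $h(BR,f)=\lambda(1-f)BR=\lambda(BR-FS)$, and demand is $L=\overline{L}_{BR}+h+L_{other}$, where $\overline{L}_{BR}$ is the steady-state quantity of bankruptcy legal services and $L_{other}$ other legal services. The paper defines the effect of bankruptcies on employment as $\frac{\partial j}{\partial BR}=\frac{\partial j}{\partial L}\cdot\frac{\partial L}{\partial BR}$ with $\frac{\partial L}{\partial BR}=\lambda(1-f)$ (i.e. holding $f$ fixed); $G_j$ is this quantity, and the claim is that it is nonnegative and decreasing in forum shopping. *)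

theory Defs
  imports "HOL-Analysis.Analysis"
begin

definition jstar :: "real \<Rightarrow> real \<Rightarrow> real \<Rightarrow> real \<Rightarrow> real \<Rightarrow> real" where
  "jstar \<delta> \<gamma> A \<rho> L = (\<gamma> powr (-\<delta>) * A powr (\<delta> - 1) * L) powr (1 / (1 + \<delta> * \<rho>))"

definition Ldem :: "real \<Rightarrow> real \<Rightarrow> real \<Rightarrow> real \<Rightarrow> real \<Rightarrow> real" where
  "Ldem Lbar lam Lother BR FS = Lbar + lam * (BR - FS) + Lother"

definition Gj :: "real \<Rightarrow> real \<Rightarrow> real \<Rightarrow> real \<Rightarrow> real \<Rightarrow> real \<Rightarrow> real \<Rightarrow> real \<Rightarrow> real \<Rightarrow> real" where
  "Gj \<delta> \<gamma> A \<rho> lam Lbar Lother BR FS =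
     deriv (jstar \<delta> \<gamma> A \<rho>) (Ldem Lbar lam Lother BR FS) * (lam * (1 - FS / BR))"

end

(* With c = gamma^(-delta) A^(delta-1) and e = 1/(1 + delta rho) we have j*(L) = (c L)^e,
   so writing u = lam (BR - FS) and K = Lbar + Lother,
     G = e c^e / BR * u (K + u)^(e-1).
   The map u |-> u (K + u)^(e-1) has derivative (K + e u) (K + u)^(e-2) > 0 and u decreases
   in FS, hence G decreases in FS.  Only e > 0 and K > 0 matter. *)
theory Submission
  imports Defs
begin

definition G_powr :: "real \<Rightarrow> real \<Rightarrow> real \<Rightarrow> real \<Rightarrow> real \<Rightarrow> real \<Rightarrow> real" where
  "G_powr c e K lam BR x = deriv (\<lambda>L. (c * L) powr e) (K + lam * (BR - x)) * (lam * (1 - x / BR))"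

lemma Gj_eq_G_powr:
  "Gj \<delta> \<gamma> A \<rho> lam Lbar Lother BR =
     G_powr (\<gamma> powr (-\<delta>) * A powr (\<delta> - 1)) (1 / (1 + \<delta> * \<rho>)) (Lbar + Lother) lam BR"
proof
  fix x
  have "jstar \<delta> \<gamma> A \<rho> = (\<lambda>L. (\<gamma> powr (-\<delta>) * A powr (\<delta> - 1) * L) powr (1 / (1 + \<delta> * \<rho>)))"
    by (simp add: jstar_def fun_eq_iff)
  moreover have "Ldem Lbar lam Lother BR x = Lbar + Lother + lam * (BR - x)"
    by (simp add: Ldem_def)
  ultimately show "Gj \<delta> \<gamma> A \<rho> lam Lbar Lother BR x =
      G_powr (\<gamma> powr (-\<delta>) * A powr (\<delta> - 1)) (1 / (1 + \<delta> * \<rho>)) (Lbar + Lother) lam BR x"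
    by (simp add: Gj_def G_powr_def)
qed

lemma deriv_scaled_powr:
  fixes c e L :: real
  assumes "c > 0" "L > 0"
  shows "deriv (\<lambda>L. (c * L) powr e) L = e * c powr e * L powr (e - 1)"
proof (rule DERIV_imp_deriv)
  have "c powr e = c powr (e - 1) * c"
    using assms by (simp add: powr_diff)
  then have "e * (c * L) powr (e - 1) * c = e * c powr e * L powr (e - 1)"
    using assms by (simp add: powr_mult)
  then show "((\<lambda>L. (c * L) powr e) has_real_derivative e * c powr e * L powr (e - 1)) (at L)"
    using assms by (auto intro!: derivative_eq_intros)
qed

lemma G_powr_eq:
  assumes "c > 0" "BR > 0" "0 < K + lam * (BR - x)"
  shows "G_powr c e K lam BR x =
           e * c powr e / BR * (lam * (BR - x) * (K + lam * (BR - x)) powr (e - 1))"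
proof -
  have "lam * (1 - x / BR) = lam * (BR - x) / BR"
    using assms(2) by (simp add: field_simps)
  then show ?thesis
    using assms by (simp add: G_powr_def deriv_scaled_powr)
qed

lemma G_powr_nonneg:
  assumes "c > 0" "e \<ge> 0" "K > 0" "lam \<ge> 0" "BR > 0" "x \<le> BR"
  shows "G_powr c e K lam BR x \<ge> 0"
proof -
  have "0 < K + lam * (BR - x)"
    using assms by (simp add: add_pos_nonneg)
  then show ?thesis
    using assms by (simp add: G_powr_eq)
qed

lemma DERIV_mult_powr_shift:
  fixes K e u :: real
  assumes "0 < K + u"
  shows "((\<lambda>u. u * (K + u) powr (e - 1)) has_real_derivative (K + e * u) * (K + u) powr (e - 2)) (at u)"
proof -
  have "(K + u) powr (e - 1) = (K + u) powr (e - 2) * (K + u)"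
    using assms by (simp add: powr_diff power2_eq_square)
  then have "(K + u) powr (e - 1) + (e - 1) * (K + u) powr (e - 2) * u
               = (K + e * u) * (K + u) powr (e - 2)"
    by (simp add: algebra_simps)
  then show ?thesis
    using assms by (auto intro!: derivative_eq_intros)
qed

lemma G_powr_has_derivative:
  assumes "c > 0" "BR > 0" "0 < K + lam * (BR - x)"
  shows "(G_powr c e K lam BR has_real_derivative
           - (lam * e * c powr e / BR * (K + e * lam * (BR - x)) * (K + lam * (BR - x)) powr (e - 2)))
         (at x)"
proof -
  define u where "u = (\<lambda>y. lam * (BR - y))"
  have "((\<lambda>y. u y * (K + u y) powr (e - 1)) has_real_derivative
          (K + e * u x) * (K + u x) powr (e - 2) * (- lam)) (at x)"
    using assms(3) unfolding u_def
    by (intro DERIV_chain2[OF DERIV_mult_powr_shift]) (auto intro!: derivative_eq_intros)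
  then have "((\<lambda>y. e * c powr e / BR * (u y * (K + u y) powr (e - 1))) has_real_derivative
               e * c powr e / BR * ((K + e * u x) * (K + u x) powr (e - 2) * (- lam))) (at x)"
    by (rule DERIV_cmult)
  also have "e * c powr e / BR * ((K + e * u x) * (K + u x) powr (e - 2) * (- lam))
      = - (lam * e * c powr e / BR * (K + e * lam * (BR - x)) * (K + lam * (BR - x)) powr (e - 2))"
    by (simp add: u_def)
  finally show ?thesis
  proof (rule has_field_derivative_transform_within_open)
    show "open {y. 0 < K + u y}"
      unfolding u_def by (intro open_Collect_less continuous_intros)
    show "x \<in> {y. 0 < K + u y}"
      using assms(3) by (simp add: u_def)
    show "e * c powr e / BR * (u y * (K + u y) powr (e - 1)) = G_powr c e K lam BR y"
      if "y \<in> {y. 0 < K + u y}" for y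
      using that assms by (simp add: u_def G_powr_eq)
  qed
qed

lemma G_powr_has_negative_derivative:
  assumes "c > 0" "e > 0" "K > 0" "lam > 0" "BR > 0" "x \<le> BR"
  shows "\<exists>D. D < 0 \<and> (G_powr c e K lam BR has_real_derivative D) (at x)"
proof -
  have "0 \<le> lam * (BR - x)"
    using assms by simp
  then have "0 < K + lam * (BR - x)" "0 < K + e * lam * (BR - x)"
    using assms by (simp_all add: add_pos_nonneg)
  then show ?thesis
    using assms G_powr_has_derivative[of c BR K lam x e] by (intro exI conjI) simp_all
qed

theorem proposition3:
  fixes \<delta> \<gamma> A_s A_u \<rho>_s \<rho>_u lam Lbar Lother BR FS :: real
  assumes "\<delta> > 1" and "\<gamma> > 0" and "A_s > 0" and "A_u > 0"
    and "\<rho>_s > 0" and "\<rho>_u > 0" and "lam > 0" and "Lbar > 0" and "Lother \<ge> 0"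
    and "BR > 0" and "0 \<le> FS" and "FS \<le> BR"
  shows "Gj \<delta> \<gamma> A_s \<rho>_s lam Lbar Lother BR FS \<ge> 0
       \<and> Gj \<delta> \<gamma> A_u \<rho>_u lam Lbar Lother BR FS \<ge> 0
       \<and> (0 < FS \<and> FS < BR \<longrightarrow>
            (\<exists>D. D < 0 \<and> ((\<lambda>x. Gj \<delta> \<gamma> A_s \<rho>_s lam Lbar Lother BR x) has_real_derivative D) (at FS))
          \<and> (\<exists>D. D < 0 \<and> ((\<lambda>x. Gj \<delta> \<gamma> A_u \<rho>_u lam Lbar Lother BR x) has_real_derivative D) (at FS)))"
proof -
  have "Gj \<delta> \<gamma> A \<rho> lam Lbar Lother BR FS \<ge> 0
        \<and> (\<exists>D. D < 0 \<and> (Gj \<delta> \<gamma> A \<rho> lam Lbar Lother BR has_real_derivative D) (at FS))"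
    if "A > 0" "\<rho> > 0" for A \<rho>
  proof -
    have "0 < \<gamma> powr (-\<delta>) * A powr (\<delta> - 1)" "0 < 1 / (1 + \<delta> * \<rho>)" "0 < Lbar + Lother"
      using assms that by (simp_all add: add_pos_pos add_pos_nonneg)
    then show ?thesis
      unfolding Gj_eq_G_powr
      using assms G_powr_nonneg G_powr_has_negative_derivative by (simp add: less_imp_le)
  qed
  then show ?thesis
    using assms by simp
qed

end
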